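(* Let $f:M^2\to\mathbb{R}^3$ be a translating soliton with height function $u=\langle f,\operatorname{v}\rangle$. On the open set $M^2\setminus\operatorname{Crit}(u)$ where $\nabla u\neq0$, the vector field $$W=-\frac{\nabla H+H\nabla u}{|\nabla u|^2}=-\frac{\nabla(e^uH)}{e^u|\nabla u|^2}$$ is divergence free, and the Gauss curvature satisfies $K=\langle\nabla H,W\rangle=\operatorname{div}(HW)$.
   Context: A translating soliton is an immersion $f:M^2\to\mathbb{R}^3$ of an oriented surface with unit normal $\xi$ whose scalar mean curvature $H$ (trace of $A(v,w)=-\langle\vec A(v,w),\xi\rangle$, $\vec A$ the second fundamental form) satisfies $H=-\langle\operatorname{v},\xi\rangle$ with $\operatorname{v}=\operatorname{e}_3$. $\nabla$, $\operatorname{div}$ are taken with respect to the induced metric, $K$ is its Gauss curvature, and $\operatorname{Crit}(u)=\{\nabla u=0\}=\{H^2=1\}$. *)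

theory Defs
  imports "HOL-Analysis.Analysis"
begin

text \<open>A piece of the
surface is given by a parametrisation f : U \<rightarrow> R^3 on an open set U of R^2;
all intrinsic quantities are computed in these coordinates.  Vector fields on
the surface are represented by their coordinate components (functions U \<rightarrow> R^2).\<close>

definition pd :: "2 \<Rightarrow> (real^2 \<Rightarrow> 'a::real_normed_vector) \<Rightarrow> real^2 \<Rightarrow> 'a" where
  "pd i g x = frechet_derivative g (at x) (axis i 1)"

definition smooth_on :: "(real^2) set \<Rightarrow> (real^2 \<Rightarrow> 'a::real_normed_vector) \<Rightarrow> bool" where
  "smooth_on U g \<longleftrightarrow> (\<forall>is. \<forall>x\<in>U. foldr pd is g differentiable (at x))"

definition immersion_on :: "(real^2) set \<Rightarrow> (real^2 \<Rightarrow> real^3) \<Rightarrow> bool" where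
  "immersion_on U f \<longleftrightarrow> open U \<and> smooth_on U f \<and>
     (\<forall>x\<in>U. cross3 (pd 1 f x) (pd 2 f x) \<noteq> 0)"

definition normal :: "(real^2 \<Rightarrow> real^3) \<Rightarrow> real^2 \<Rightarrow> real^3" where
  "normal f x = (1 / norm (cross3 (pd 1 f x) (pd 2 f x))) *\<^sub>R cross3 (pd 1 f x) (pd 2 f x)"

definition metric :: "(real^2 \<Rightarrow> real^3) \<Rightarrow> real^2 \<Rightarrow> real^2^2" where
  "metric f x = (\<chi> i j. pd i f x \<bullet> pd j f x)"

definition ginv :: "(real^2 \<Rightarrow> real^3) \<Rightarrow> real^2 \<Rightarrow> real^2^2" where
  "ginv f x = matrix_inv (metric f x)"

text \<open>Scalar second fundamental form A(v,w) = - <vecA(v,w), xi>; in coordinates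
A_ij = - <d_i d_j f, xi>.\<close>
definition sff :: "(real^2 \<Rightarrow> real^3) \<Rightarrow> real^2 \<Rightarrow> real^2^2" where
  "sff f x = (\<chi> i j. - (pd i (pd j f) x \<bullet> normal f x))"

definition mean_curv :: "(real^2 \<Rightarrow> real^3) \<Rightarrow> real^2 \<Rightarrow> real" where
  "mean_curv f x = (\<Sum>i\<in>UNIV. \<Sum>j\<in>UNIV. ginv f x $ i $ j * sff f x $ i $ j)"

definition grad :: "(real^2 \<Rightarrow> real^3) \<Rightarrow> (real^2 \<Rightarrow> real) \<Rightarrow> real^2 \<Rightarrow> real^2" where
  "grad f \<phi> x = ginv f x *v (\<chi> j. pd j \<phi> x)"

definition gin :: "(real^2 \<Rightarrow> real^3) \<Rightarrow> real^2 \<Rightarrow> real^2 \<Rightarrow> real^2 \<Rightarrow> real" where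
  "gin f x X Y = X \<bullet> (metric f x *v Y)"

definition vol :: "(real^2 \<Rightarrow> real^3) \<Rightarrow> real^2 \<Rightarrow> real" where
  "vol f x = sqrt (det (metric f x))"

definition divg :: "(real^2 \<Rightarrow> real^3) \<Rightarrow> (real^2 \<Rightarrow> real^2) \<Rightarrow> real^2 \<Rightarrow> real" where
  "divg f X x = (1 / vol f x) * (\<Sum>i\<in>UNIV. pd i (\<lambda>y. vol f y * X y $ i) x)"

definition christoffel :: "(real^2 \<Rightarrow> real^3) \<Rightarrow> 2 \<Rightarrow> 2 \<Rightarrow> 2 \<Rightarrow> real^2 \<Rightarrow> real" where
  "christoffel f k i j x = 1/2 * (\<Sum>l\<in>UNIV. ginv f x $ k $ l *
      (pd i (\<lambda>y. metric f y $ j $ l) x + pd j (\<lambda>y. metric f y $ i $ l) x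
       - pd l (\<lambda>y. metric f y $ i $ j) x))"

text \<open>Components R^l of R(d_i,d_j)d_k = nabla_i nabla_j d_k - nabla_j nabla_i d_k.\<close>
definition riem :: "(real^2 \<Rightarrow> real^3) \<Rightarrow> 2 \<Rightarrow> 2 \<Rightarrow> 2 \<Rightarrow> 2 \<Rightarrow> real^2 \<Rightarrow> real" where
  "riem f i j k l x =
     pd i (christoffel f l j k) x - pd j (christoffel f l i k) x
     + (\<Sum>m\<in>UNIV. christoffel f m j k x * christoffel f l i m x
                 - christoffel f m i k x * christoffel f l j m x)"

text \<open>Gauss curvature of the induced metric: sectional curvature
<R(d_1,d_2)d_2, d_1> / (g_11 g_22 - g_12^2).\<close>
definition gauss_curv :: "(real^2 \<Rightarrow> real^3) \<Rightarrow> real^2 \<Rightarrow> real" where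
  "gauss_curv f x = (\<Sum>l\<in>UNIV. riem f 1 2 2 l x * metric f x $ l $ 1) / det (metric f x)"

text \<open>Translating soliton with velocity e_3: H = - <e_3, xi>.\<close>
definition translating_soliton :: "(real^2) set \<Rightarrow> (real^2 \<Rightarrow> real^3) \<Rightarrow> bool" where
  "translating_soliton U f \<longleftrightarrow> immersion_on U f \<and>
     (\<forall>x\<in>U. mean_curv f x = - (axis 3 1 \<bullet> normal f x))"

definition height :: "(real^2 \<Rightarrow> real^3) \<Rightarrow> real^2 \<Rightarrow> real" where
  "height f x = f x \<bullet> axis 3 1"

definition Wfield :: "(real^2 \<Rightarrow> real^3) \<Rightarrow> real^2 \<Rightarrow> real^2" where
  "Wfield f x = - (1 / gin f x (grad f (height f) x) (grad f (height f) x)) *\<^sub>R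
      (grad f (mean_curv f) x + mean_curv f x *\<^sub>R grad f (height f) x)"

end

theory Submission
  imports Defs
begin

text \<open>Work in the chart with the unnormalised normal \<open>N = f\<^sub>1 \<times> f\<^sub>2\<close>.  The soliton equation
reads \<open>H = -N\<^sub>3/|N|\<close>, and \<open>|\<nabla>u|\<^sup>2 = (N\<^sub>1\<^sup>2 + N\<^sub>2\<^sup>2)/|N|\<^sup>2\<close>.  Substituting this into the
definition of \<open>W\<close>, the flux density \<open>|N|\<cdot>W\<close> of \<open>W\<close> has components \<open>P\<^sub>i/(N\<^sub>1\<^sup>2 + N\<^sub>2\<^sup>2)\<close>
with \<open>P\<^sub>1 = L\<^sub>2\<^sub>2u\<^sub>1 - L\<^sub>1\<^sub>2u\<^sub>2\<close>, \<open>P\<^sub>2 = L\<^sub>1\<^sub>1u\<^sub>2 - L\<^sub>1\<^sub>2u\<^sub>1\<close>, where \<open>L\<^sub>i\<^sub>j = f\<^sub>i\<^sub>j\<cdot>N\<close> and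
\<open>u\<^sub>i = f\<^sub>i\<cdot>e\<^sub>3\<close>.  That this flux density has vanishing coordinate divergence is then a
polynomial identity in the derivatives of \<open>f\<close> up to order three, using only the symmetry of
mixed partials.  Likewise \<open>\<langle>\<nabla>H, W\<rangle> = K\<close> becomes a polynomial identity once \<open>K\<close> is written
by the Gauss equation as \<open>(L\<^sub>1\<^sub>1L\<^sub>2\<^sub>2 - L\<^sub>1\<^sub>2\<^sup>2)/|N|\<^sup>4\<close>, and \<open>div(HW) = \<langle>\<nabla>H, W\<rangle> + H div W\<close>.\<close>

section \<open>Partial derivatives\<close>

lemmas has_frechet_derivative = frechet_derivative_works[THEN iffD1]

lemma pd_eq_derivative: "(g has_derivative g') (at x) \<Longrightarrow> pd i g x = g' (axis i 1)"
  by (simp add: pd_def frechet_derivative_at[symmetric])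

lemma pd_cong_open:
  assumes "open S" "x \<in> S" "\<And>y. y \<in> S \<Longrightarrow> g y = h y" "g differentiable at x"
  shows "pd i g x = pd i h x"
  using frechet_derivative_transform_within_open[OF assms(4,1,2)] assms(3) by (simp add: pd_def)

lemma differentiable_cong_open:
  assumes "open S" "x \<in> S" "\<And>y. y \<in> S \<Longrightarrow> g y = h y" "g differentiable at x"
  shows "h differentiable at x"
  using assms unfolding differentiable_def by (meson has_derivative_transform_within_open)

lemma has_derivative_cross3:
  assumes "(f has_derivative f') (at x)" "(g has_derivative g') (at x)"
  shows "((\<lambda>y. cross3 (f y) (g y)) has_derivative
           (\<lambda>h. cross3 (f x) (g' h) + cross3 (f' h) (g x))) (at x)"
  using bounded_bilinear.FDERIV[OF bilinear_conv_bounded_bilinear[THEN iffD1, OF bilinear_cross] assms] .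

lemma differentiable_cross3 [simp]:
  "f differentiable at x \<Longrightarrow> g differentiable at x \<Longrightarrow> (\<lambda>y. cross3 (f y) (g y)) differentiable at x"
  by (rule differentiableI, rule has_derivative_cross3, (rule has_frechet_derivative, assumption)+)

lemma differentiable_vec_nth [simp]: "f differentiable at x \<Longrightarrow> (\<lambda>y. f y $ k) differentiable at x"
  by (rule differentiableI, rule bounded_linear.has_derivative[OF bounded_linear_vec_nth],
      rule has_frechet_derivative)

lemma differentiable_sqrt [simp]:
  "f differentiable at x \<Longrightarrow> f x > 0 \<Longrightarrow> (\<lambda>y. sqrt (f y)) differentiable at x"
  by (rule differentiableI, rule has_derivative_real_sqrt, assumption, rule has_frechet_derivative)

lemma differentiable_exp [simp]: "f differentiable at x \<Longrightarrow> (\<lambda>y. exp (f y :: real)) differentiable at x"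
  by (rule differentiableI, rule has_derivative_exp, rule has_frechet_derivative)

lemma pd_add: "f differentiable at x \<Longrightarrow> g differentiable at x \<Longrightarrow>
    pd i (\<lambda>y. f y + g y) x = pd i f x + pd i g x"
  using pd_eq_derivative[OF has_derivative_add[OF has_frechet_derivative has_frechet_derivative], of f x g i]
  by (simp add: pd_def)

lemma pd_diff: "f differentiable at x \<Longrightarrow> g differentiable at x \<Longrightarrow>
    pd i (\<lambda>y. f y - g y) x = pd i f x - pd i g x"
  using pd_eq_derivative[OF has_derivative_diff[OF has_frechet_derivative has_frechet_derivative], of f x g i]
  by (simp add: pd_def)

lemma pd_minus: "f differentiable at x \<Longrightarrow> pd i (\<lambda>y. - f y) x = - pd i f x"
  using pd_eq_derivative[OF has_derivative_minus[OF has_frechet_derivative], of f x i]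
  by (simp add: pd_def)

lemma pd_const: "pd i (\<lambda>y. c) x = 0"
  by (simp add: pd_def)

lemma pd_mult: "f differentiable at x \<Longrightarrow> g differentiable at x \<Longrightarrow>
    pd i (\<lambda>y. f y * g y :: real) x = pd i f x * g x + f x * pd i g x"
  using pd_eq_derivative[OF has_derivative_mult[OF has_frechet_derivative has_frechet_derivative], of f x g i]
  by (simp add: pd_def)

lemma pd_inner: "f differentiable at x \<Longrightarrow> g differentiable at x \<Longrightarrow>
    pd i (\<lambda>y. f y \<bullet> g y) x = pd i f x \<bullet> g x + f x \<bullet> pd i g x"
  using pd_eq_derivative[OF has_derivative_inner[OF has_frechet_derivative has_frechet_derivative], of f x g i]
  by (simp add: pd_def)

lemma pd_cross3: "f differentiable at x \<Longrightarrow> g differentiable at x \<Longrightarrow>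
    pd i (\<lambda>y. cross3 (f y) (g y)) x = cross3 (pd i f x) (g x) + cross3 (f x) (pd i g x)"
  using pd_eq_derivative[OF has_derivative_cross3[OF has_frechet_derivative has_frechet_derivative], of f x g i]
  by (simp add: pd_def)

lemma pd_vec_nth: "f differentiable at x \<Longrightarrow> pd i (\<lambda>y. f y $ k) x = pd i f x $ k"
  using pd_eq_derivative[OF bounded_linear.has_derivative[OF bounded_linear_vec_nth has_frechet_derivative], of f x i k]
  by (simp add: pd_def)

lemma pd_divide:
  assumes "f differentiable at x" "g differentiable at x" "g x \<noteq> 0"
  shows "pd i (\<lambda>y. f y / g y :: real) x = (pd i f x * g x - f x * pd i g x) / (g x)\<^sup>2"
  using pd_eq_derivative[OF has_derivative_divide[OF has_frechet_derivative has_frechet_derivative], OF assms]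
    assms(3)
  by (simp add: pd_def power2_eq_square field_simps)

lemma pd_sqrt:
  assumes "f differentiable at x" "f x > 0"
  shows "pd i (\<lambda>y. sqrt (f y)) x = pd i f x / (2 * sqrt (f x))"
  using pd_eq_derivative[OF has_derivative_real_sqrt[OF assms(2) has_frechet_derivative[OF assms(1)]]] assms(2)
  by (simp add: pd_def field_simps)

lemma pd_exp: "f differentiable at x \<Longrightarrow> pd i (\<lambda>y. exp (f y :: real)) x = pd i f x * exp (f x)"
  using pd_eq_derivative[OF has_derivative_exp[OF has_frechet_derivative], of f x i]
  by (simp add: pd_def field_simps)

lemmas pd_rules = pd_add pd_diff pd_minus pd_mult pd_divide pd_inner pd_cross3 pd_vec_nth pd_const
  pd_sqrt pd_exp

section \<open>Symmetry of mixed partial derivatives\<close>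

lemma has_derivative_along_line:
  fixes g :: "real^2 \<Rightarrow> real"
  assumes "g differentiable at (c + s *\<^sub>R v)"
  shows "((\<lambda>s. g (c + s *\<^sub>R v)) has_derivative
           (\<lambda>h. h * frechet_derivative g (at (c + s *\<^sub>R v)) v)) (at s within T)"
proof -
  have "((\<lambda>s. c + s *\<^sub>R v) has_derivative (\<lambda>h. h *\<^sub>R v)) (at s within T)"
    by (auto intro!: derivative_eq_intros)
  from has_derivative_compose[OF this has_frechet_derivative[OF assms]]
  moreover have "linear (frechet_derivative g (at (c + s *\<^sub>R v)))"
    using assms linear_frechet_derivative by blast
  ultimately show ?thesis
    by (simp add: linear_scale)
qed

lemma second_difference_mvt:
  fixes g :: "real^2 \<Rightarrow> real"
  assumes diff: "\<And>y. norm (y - x) < d \<Longrightarrow> g differentiable at y" and t: "0 < t" "2 * t < d"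
  obtains s where "s \<in> {0..t}"
    "g (x + t *\<^sub>R axis a 1 + t *\<^sub>R axis b 1) - g (x + t *\<^sub>R axis b 1) - g (x + t *\<^sub>R axis a 1) + g x
       = t * (pd a g (x + t *\<^sub>R axis b 1 + s *\<^sub>R axis a 1) - pd a g (x + s *\<^sub>R axis a 1))"
proof -
  define A where "A = (axis a 1 :: real^2)"
  define B where "B = (axis b 1 :: real^2)"
  define \<phi> where "\<phi> s = g ((x + t *\<^sub>R B) + s *\<^sub>R A) - g (x + s *\<^sub>R A)" for s
  have der: "(\<phi> has_derivative (\<lambda>h. h * (pd a g (x + t *\<^sub>R B + s *\<^sub>R A) - pd a g (x + s *\<^sub>R A))))
      (at s within {0..t})" if s: "s \<in> {0..t}" for s
  proof -
    have "norm (s *\<^sub>R A + t *\<^sub>R B) \<le> \<bar>s\<bar> + \<bar>t\<bar>"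
      using norm_triangle_ineq[of "s *\<^sub>R A" "t *\<^sub>R B"] by (simp add: A_def B_def)
    then have "g differentiable at (x + t *\<^sub>R B + s *\<^sub>R A)" "g differentiable at (x + s *\<^sub>R A)"
      using diff[of "x + t *\<^sub>R B + s *\<^sub>R A"] diff[of "x + s *\<^sub>R A"] s t
      by (auto simp: A_def add.commute add.left_commute)
    from has_derivative_diff[OF has_derivative_along_line[OF this(1)] has_derivative_along_line[OF this(2)]]
    show ?thesis
      unfolding \<phi>_def by (simp add: pd_def A_def algebra_simps)
  qed
  have "\<exists>s\<in>{0..t}. \<phi> t - \<phi> 0 = (t - 0) * (pd a g (x + t *\<^sub>R B + s *\<^sub>R A) - pd a g (x + s *\<^sub>R A))"
    by (rule mvt_very_simple) (use t der in auto)
  with that show thesis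
    unfolding \<phi>_def A_def B_def by (auto simp: algebra_simps)
qed

lemma second_difference_approx:
  fixes g :: "real^2 \<Rightarrow> real"
  assumes diff: "\<And>y. norm (y - x) < d \<Longrightarrow> g differentiable at y"
    and approx: "\<And>v. norm v < d \<Longrightarrow> \<bar>pd a g (x + v) - pd a g x - L v\<bar> \<le> e * norm v"
    and L: "linear L" and e: "0 \<le> e" and t: "0 < t" "2 * t < d"
  shows "\<bar>g (x + t *\<^sub>R axis a 1 + t *\<^sub>R axis b 1) - g (x + t *\<^sub>R axis b 1) - g (x + t *\<^sub>R axis a 1) + g x
          - t\<^sup>2 * L (axis b 1)\<bar> \<le> 3 * e * t\<^sup>2"
proof -
  define A where "A = (axis a 1 :: real^2)"
  define B where "B = (axis b 1 :: real^2)"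
  obtain s where s: "s \<in> {0..t}" and mvt:
    "g (x + t *\<^sub>R A + t *\<^sub>R B) - g (x + t *\<^sub>R B) - g (x + t *\<^sub>R A) + g x
       = t * (pd a g (x + t *\<^sub>R B + s *\<^sub>R A) - pd a g (x + s *\<^sub>R A))"
    using second_difference_mvt[OF diff t] unfolding A_def B_def by blast
  define D where "D = pd a g (x + t *\<^sub>R B + s *\<^sub>R A) - pd a g (x + s *\<^sub>R A)"
  define v1 where "v1 = s *\<^sub>R A + t *\<^sub>R B"
  define v2 where "v2 = s *\<^sub>R A"
  have v1: "norm v1 \<le> 2 * t"
    using norm_triangle_ineq[of "s *\<^sub>R A" "t *\<^sub>R B"] s t by (simp add: v1_def A_def B_def)
  have v2: "norm v2 \<le> t"
    using s by (simp add: v2_def A_def)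
  have "D - t * L B = (pd a g (x + v1) - pd a g x - L v1) - (pd a g (x + v2) - pd a g x - L v2)"
    using L unfolding D_def v1_def v2_def by (simp add: linear_add linear_scale algebra_simps)
  also have "\<bar>\<dots>\<bar> \<le> e * norm v1 + e * norm v2"
    using approx[of v1] approx[of v2] v1 v2 t by (simp add: abs_le_iff)
  also have "\<dots> \<le> 3 * e * t"
    using mult_left_mono[OF v1 e] mult_left_mono[OF v2 e] by linarith
  finally have bound: "\<bar>D - t * L B\<bar> \<le> 3 * e * t" .
  have "t * D - t\<^sup>2 * L B = t * (D - t * L B)"
    by (simp add: power2_eq_square algebra_simps)
  then have "\<bar>t * D - t\<^sup>2 * L B\<bar> = t * \<bar>D - t * L B\<bar>"
    using t by (simp add: abs_mult)
  also have "\<dots> \<le> t * (3 * e * t)"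
    using bound t by (intro mult_left_mono) auto
  finally show ?thesis
    using mvt unfolding D_def A_def B_def by (simp add: power2_eq_square algebra_simps)
qed

text \<open>The second difference of \<open>g\<close> at \<open>x\<close> with steps \<open>t e\<^sub>a\<close>, \<open>t e\<^sub>b\<close> is symmetric in \<open>a\<close> and \<open>b\<close>,
but by \<open>second_difference_approx\<close> it approximates both \<open>t\<^sup>2 \<partial>\<^sub>b\<partial>\<^sub>a g(x)\<close> and \<open>t\<^sup>2 \<partial>\<^sub>a\<partial>\<^sub>b g(x)\<close>.\<close>

lemma mixed_partials_close:
  fixes g :: "real^2 \<Rightarrow> real"
  assumes S: "open S" "x \<in> S" "\<And>y. y \<in> S \<Longrightarrow> g differentiable at y"
    and Ha: "(pd a g has_derivative La) (at x)" and Hb: "(pd b g has_derivative Lb) (at x)"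
    and e: "e > 0"
  shows "\<bar>La (axis b 1) - Lb (axis a 1)\<bar> \<le> 6 * e"
proof -
  obtain d0 where d0: "d0 > 0" "ball x d0 \<subseteq> S"
    using S openE by blast
  obtain da where da: "da > 0"
    "\<And>y. norm (y - x) < da \<Longrightarrow> norm (pd a g y - pd a g x - La (y - x)) \<le> e * norm (y - x)"
    using Ha e unfolding has_derivative_at_alt by blast
  obtain db where db: "db > 0"
    "\<And>y. norm (y - x) < db \<Longrightarrow> norm (pd b g y - pd b g x - Lb (y - x)) \<le> e * norm (y - x)"
    using Hb e unfolding has_derivative_at_alt by blast
  define d where "d = min d0 (min da db)"
  define t where "t = d / 4"
  have "d > 0"
    using d0 da db by (simp add: d_def)
  then have t: "0 < t" "2 * t < d"
    by (simp_all add: t_def)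
  have diff: "g differentiable at y" if "norm (y - x) < d" for y
    using that d0 S(3) unfolding d_def by (auto simp: dist_norm norm_minus_commute)
  have "\<bar>g (x + t *\<^sub>R axis a 1 + t *\<^sub>R axis b 1) - g (x + t *\<^sub>R axis b 1) - g (x + t *\<^sub>R axis a 1) + g x
        - t\<^sup>2 * La (axis b 1)\<bar> \<le> 3 * e * t\<^sup>2"
    by (rule second_difference_approx[OF diff _ has_derivative_linear[OF Ha] _ t])
      (use da(2)[of "x + v" for v] e in \<open>auto simp: d_def\<close>)
  moreover have "\<bar>g (x + t *\<^sub>R axis b 1 + t *\<^sub>R axis a 1) - g (x + t *\<^sub>R axis a 1) - g (x + t *\<^sub>R axis b 1) + g x
        - t\<^sup>2 * Lb (axis a 1)\<bar> \<le> 3 * e * t\<^sup>2"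
    by (rule second_difference_approx[OF diff _ has_derivative_linear[OF Hb] _ t])
      (use db(2)[of "x + v" for v] e in \<open>auto simp: d_def\<close>)
  ultimately have "\<bar>t\<^sup>2 * (La (axis b 1) - Lb (axis a 1))\<bar> \<le> t\<^sup>2 * (6 * e)"
    by (simp add: abs_le_iff algebra_simps)
  then show ?thesis
    using t by (simp add: abs_mult)
qed

lemma pd_commute:
  fixes g :: "real^2 \<Rightarrow> real"
  assumes S: "open S" "x \<in> S" "\<And>y. y \<in> S \<Longrightarrow> g differentiable at y"
    and "pd a g differentiable at x" "pd b g differentiable at x"
  shows "pd b (pd a g) x = pd a (pd b g) x"
proof -
  define La where "La = frechet_derivative (pd a g) (at x)"
  define Lb where "Lb = frechet_derivative (pd b g) (at x)"
  have Ha: "(pd a g has_derivative La) (at x)" and Hb: "(pd b g has_derivative Lb) (at x)"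
    using assms(4,5) by (simp_all add: La_def Lb_def has_frechet_derivative)
  have "La (axis b 1) = Lb (axis a 1)"
  proof (rule ccontr)
    assume "La (axis b 1) \<noteq> Lb (axis a 1)"
    then show False
      using mixed_partials_close[OF S Ha Hb, of "\<bar>La (axis b 1) - Lb (axis a 1)\<bar> / 12"] by simp
  qed
  then show ?thesis
    by (simp add: pd_def La_def Lb_def)
qed

lemma pd_commute_vec:
  fixes g :: "real^2 \<Rightarrow> real^'n"
  assumes S: "open S" "x \<in> S" "\<And>y. y \<in> S \<Longrightarrow> g differentiable at y"
    and da: "pd a g differentiable at x" and db: "pd b g differentiable at x"
  shows "pd b (pd a g) x = pd a (pd b g) x"
proof -
  have "pd b (pd a g) x $ k = pd a (pd b g) x $ k" for k
  proof -
    define gk where "gk = (\<lambda>y. g y $ k)"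
    have pd_gk: "pd c gk y = pd c g y $ k" if "y \<in> S" for c y
      unfolding gk_def using pd_vec_nth S(3)[OF that] by blast
    have "pd a gk differentiable at x" "pd b gk differentiable at x"
      using differentiable_cong_open[OF S(1,2), of "\<lambda>y. pd _ g y $ k"] pd_gk da db by auto
    moreover have "gk differentiable at y" if "y \<in> S" for y
      using S(3)[OF that] by (simp add: gk_def)
    ultimately have "pd b (pd a gk) x = pd a (pd b gk) x"
      using pd_commute[OF S(1,2)] by blast
    moreover have "pd b (pd a gk) x = pd b (pd a g) x $ k"
      using pd_cong_open[OF S(1,2), of "\<lambda>y. pd a g y $ k" "pd a gk" b] pd_gk da pd_vec_nth[OF da]
      by auto
    moreover have "pd a (pd b gk) x = pd a (pd b g) x $ k"
      using pd_cong_open[OF S(1,2), of "\<lambda>y. pd b g y $ k" "pd b gk" a] pd_gk db pd_vec_nth[OF db]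
      by auto
    ultimately show ?thesis
      by simp
  qed
  then show ?thesis
    by (simp add: vec_eq_iff)
qed

definition adjugate2 :: "real^2^2 \<Rightarrow> 2 \<Rightarrow> 2 \<Rightarrow> real" where
  "adjugate2 M i j =
     (if i = 1 then (if j = 1 then M$2$2 else - M$1$2) else (if j = 1 then - M$2$1 else M$1$1))"

lemma two_neq [simp]: "(1::2) \<noteq> 2" "(2::2) \<noteq> 1"
  by auto

lemma matrix_inv_2x2:
  fixes M :: "real^2^2"
  assumes "det M \<noteq> 0"
  shows "matrix_inv M = (\<chi> i j. adjugate2 M i j / det M)"
proof -
  define B where "B = (\<chi> i j. adjugate2 M i j / det M)"
  have inv: "M ** B = mat 1" "B ** M = mat 1"
    using assms unfolding B_def
     apply (auto simp: matrix_matrix_mult_def mat_def vec_eq_iff forall_2 sum_2 det_2 adjugate2_def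
        field_simps)
    by algebra+
  then have "M ** matrix_inv M = mat 1 \<and> matrix_inv M ** M = mat 1"
    unfolding matrix_inv_def by (rule someI[of _ B, OF conjI])
  then have "matrix_inv M = B"
    using inv by (metis matrix_mul_assoc matrix_mul_lid matrix_mul_rid)
  then show ?thesis
    unfolding B_def .
qed

definition nvec :: "(real^2 \<Rightarrow> real^3) \<Rightarrow> real^2 \<Rightarrow> real^3" where
  "nvec f y = cross3 (pd 1 f y) (pd 2 f y)"

definition gdet :: "(real^2 \<Rightarrow> real^3) \<Rightarrow> real^2 \<Rightarrow> real" where
  "gdet f y = nvec f y \<bullet> nvec f y"

lemma metric_nth [simp]: "metric f y $ i $ j = pd i f y \<bullet> pd j f y"
  by (simp add: metric_def)

lemma det_metric: "det (metric f y) = gdet f y"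
  by (simp add: det_2 gdet_def nvec_def dot_cross inner_commute)

lemma gdet_eq: "gdet f y = (pd 1 f y \<bullet> pd 1 f y) * (pd 2 f y \<bullet> pd 2 f y) - (pd 1 f y \<bullet> pd 2 f y)\<^sup>2"
  by (simp add: gdet_def nvec_def dot_cross inner_commute power2_eq_square)

lemma normal_eq_nvec: "normal f y = (1 / sqrt (gdet f y)) *\<^sub>R nvec f y"
  by (simp add: normal_def nvec_def gdet_def norm_eq_sqrt_inner)

lemma vol_eq_sqrt_gdet: "vol f y = sqrt (gdet f y)"
  by (simp add: vol_def det_metric)

lemma grad_nth: "grad f \<phi> y $ i = (\<Sum>j\<in>UNIV. ginv f y $ i $ j * pd j \<phi> y)"
  by (simp add: grad_def matrix_vector_mult_def)

lemma gin_eq: "gin f y X Y = (\<Sum>i\<in>UNIV. X $ i * (\<Sum>j\<in>UNIV. metric f y $ i $ j * Y $ j))"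
  by (simp add: gin_def inner_vec_def matrix_vector_mult_def)

locale immersed_chart =
  fixes U :: "(real^2) set" and f :: "real^2 \<Rightarrow> real^3"
  assumes immersion: "immersion_on U f"
begin

lemma open_chart: "open U"
  using immersion by (simp add: immersion_on_def)

lemma differentiable_iterated_pd_f: "y \<in> U \<Longrightarrow> foldr pd is f differentiable at y"
  using immersion by (simp add: immersion_on_def smooth_on_def)

lemma differentiable_f: "y \<in> U \<Longrightarrow> f differentiable at y"
  using differentiable_iterated_pd_f[of y "[]"] by simp

lemma differentiable_pd_f: "y \<in> U \<Longrightarrow> pd i f differentiable at y"
  using differentiable_iterated_pd_f[of y "[i]"] by simp

lemma differentiable_pd2_f: "y \<in> U \<Longrightarrow> pd i (pd j f) differentiable at y"
  using differentiable_iterated_pd_f[of y "[i, j]"] by simp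

lemma differentiable_pd3_f: "y \<in> U \<Longrightarrow> pd k (pd i (pd j f)) differentiable at y"
  using differentiable_iterated_pd_f[of y "[k, i, j]"] by simp

lemma nvec_nonzero: "y \<in> U \<Longrightarrow> nvec f y \<noteq> 0"
  using immersion by (simp add: immersion_on_def nvec_def)

lemma gdet_pos: "y \<in> U \<Longrightarrow> gdet f y > 0"
  using nvec_nonzero by (simp add: gdet_def)

lemma pd2_f_commute: "y \<in> U \<Longrightarrow> pd i (pd j f) y = pd j (pd i f) y"
  by (rule pd_commute_vec[OF open_chart _ differentiable_f differentiable_pd_f differentiable_pd_f])

lemma pd3_f_commute_outer: "y \<in> U \<Longrightarrow> pd i (pd j (pd k f)) y = pd j (pd i (pd k f)) y"
  by (rule pd_commute_vec[OF open_chart _ differentiable_pd_f differentiable_pd2_f differentiable_pd2_f])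

lemma pd3_f_commute_inner: "y \<in> U \<Longrightarrow> pd i (pd j (pd k f)) y = pd i (pd k (pd j f)) y"
  by (rule pd_cong_open[OF open_chart _ pd2_f_commute differentiable_pd2_f])

lemma mixed_pd_f_sorted:
  assumes "x \<in> U"
  shows "pd 2 (pd 1 f) x = pd 1 (pd 2 f) x"
    "pd 2 (pd 1 (pd 1 f)) x = pd 1 (pd 1 (pd 2 f)) x"
    "pd 1 (pd 2 (pd 1 f)) x = pd 1 (pd 1 (pd 2 f)) x"
    "pd 2 (pd 1 (pd 2 f)) x = pd 1 (pd 2 (pd 2 f)) x"
    "pd 2 (pd 2 (pd 1 f)) x = pd 1 (pd 2 (pd 2 f)) x"
  using pd2_f_commute[OF assms] pd3_f_commute_outer[OF assms] pd3_f_commute_inner[OF assms] by metis+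

lemma ginv_nth: "y \<in> U \<Longrightarrow> ginv f y $ k $ l = adjugate2 (metric f y) k l / gdet f y"
  using gdet_pos[of y] by (simp add: ginv_def matrix_inv_2x2 det_metric)

lemma differentiable_nvec: "y \<in> U \<Longrightarrow> nvec f differentiable at y"
  unfolding nvec_def[abs_def] using differentiable_pd_f by simp

lemma differentiable_gdet: "y \<in> U \<Longrightarrow> gdet f differentiable at y"
  unfolding gdet_def[abs_def] using differentiable_nvec by simp

lemma differentiable_adjugate2_metric: "y \<in> U \<Longrightarrow> (\<lambda>z. adjugate2 (metric f z) k l) differentiable at y"
  using differentiable_pd_f exhaust_2[of k] exhaust_2[of l] by (auto simp: adjugate2_def)

lemma pd_nvec: "y \<in> U \<Longrightarrow>
    pd a (nvec f) y = cross3 (pd a (pd 1 f) y) (pd 2 f y) + cross3 (pd 1 f y) (pd a (pd 2 f) y)"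
  unfolding nvec_def[abs_def] using differentiable_pd_f pd_cross3 by blast

lemma pd_gdet: "y \<in> U \<Longrightarrow> pd a (gdet f) y = 2 * (nvec f y \<bullet> pd a (nvec f) y)"
  unfolding gdet_def[abs_def] using differentiable_nvec pd_inner[of "nvec f" y "nvec f" a]
  by (simp add: inner_commute)

lemma differentiable_height: "y \<in> U \<Longrightarrow> height f differentiable at y"
  unfolding height_def[abs_def] using differentiable_f by simp

lemma pd_height: "y \<in> U \<Longrightarrow> pd k (height f) y = pd k f y $ 3"
  unfolding height_def[abs_def] using differentiable_f by (simp add: pd_rules inner_axis)

end

section \<open>Polynomial identities for vectors in \<open>\<real>\<^sup>3\<close>\<close>

lemmas vec3_expand = inner_vec_def sum_3 cross_components vector_add_component inner_real_def

lemma cross3_horiz_sq: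
  fixes e1 e2 :: "real^3"
  shows "(cross3 e1 e2 $ 1)\<^sup>2 + (cross3 e1 e2 $ 2)\<^sup>2 =
     (e1$3)\<^sup>2 * (e2 \<bullet> e2) - 2 * (e1$3) * (e2$3) * (e1 \<bullet> e2) + (e2$3)\<^sup>2 * (e1 \<bullet> e1)"
  by (simp only: vec3_expand) algebra

lemma inner_cross3_mult_inner_cross3:
  fixes a b e1 e2 :: "real^3"
  shows "(a \<bullet> cross3 e1 e2) * (b \<bullet> cross3 e1 e2) =
    (a \<bullet> b) * ((e1 \<bullet> e1) * (e2 \<bullet> e2) - (e1 \<bullet> e2) * (e1 \<bullet> e2))
    - (a \<bullet> e1) * ((e1 \<bullet> b) * (e2 \<bullet> e2) - (e1 \<bullet> e2) * (e2 \<bullet> b))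
    + (a \<bullet> e2) * ((e1 \<bullet> b) * (e1 \<bullet> e2) - (e1 \<bullet> e1) * (e2 \<bullet> b))"
  by (simp only: vec3_expand) algebra

text \<open>In the next two identities \<open>e\<^sub>i\<close>, \<open>f\<^sub>i\<^sub>j\<close> stand for the first and second derivatives
of the chart, \<open>N\<close> for \<open>e\<^sub>1 \<times> e\<^sub>2\<close> and \<open>dN\<^sub>k\<close> for its derivatives.\<close>

lemma flux_polynomial_identity:
  fixes e1 e2 f11 f12 f22 :: "real^3"
  defines "N \<equiv> cross3 e1 e2"
  defines "D \<equiv> N \<bullet> N"
  defines "dN1 \<equiv> cross3 f11 e2 + cross3 e1 f12"
  defines "dN2 \<equiv> cross3 f12 e2 + cross3 e1 f22"
  defines "b1 \<equiv> - (dN1 $ 3) * D + N $ 3 * (N \<bullet> dN1)"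
  defines "b2 \<equiv> - (dN2 $ 3) * D + N $ 3 * (N \<bullet> dN2)"
  defines "t \<equiv> - ((e2 \<bullet> e2) * (f11 \<bullet> N) - 2 * (e1 \<bullet> e2) * (f12 \<bullet> N) + (e1 \<bullet> e1) * (f22 \<bullet> N))"
  shows "- ((e2 \<bullet> e2) * b1 - (e1 \<bullet> e2) * b2 + t * ((e2 \<bullet> e2) * e1$3 - (e1 \<bullet> e2) * e2$3))
     = ((f22 \<bullet> N) * e1$3 - (f12 \<bullet> N) * e2$3) * D"
    and "- (- (e1 \<bullet> e2) * b1 + (e1 \<bullet> e1) * b2 + t * (- (e1 \<bullet> e2) * e1$3 + (e1 \<bullet> e1) * e2$3))
     = ((f11 \<bullet> N) * e2$3 - (f12 \<bullet> N) * e1$3) * D"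
  unfolding N_def D_def dN1_def dN2_def b1_def b2_def t_def
  by (simp only: vec3_expand; algebra)+

lemma gauss_flux_polynomial_identity:
  fixes e1 e2 f11 f12 f22 :: "real^3"
  defines "N \<equiv> cross3 e1 e2"
  defines "D \<equiv> N \<bullet> N"
  defines "dN1 \<equiv> cross3 f11 e2 + cross3 e1 f12"
  defines "dN2 \<equiv> cross3 f12 e2 + cross3 e1 f22"
  defines "b1 \<equiv> - (dN1 $ 3) * D + N $ 3 * (N \<bullet> dN1)"
  defines "b2 \<equiv> - (dN2 $ 3) * D + N $ 3 * (N \<bullet> dN2)"
  shows "b1 * ((f22 \<bullet> N) * e1$3 - (f12 \<bullet> N) * e2$3) + b2 * ((f11 \<bullet> N) * e2$3 - (f12 \<bullet> N) * e1$3)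
     = ((f11 \<bullet> N) * (f22 \<bullet> N) - (f12 \<bullet> N)\<^sup>2) * ((N$1)\<^sup>2 + (N$2)\<^sup>2)"
  unfolding N_def D_def dN1_def dN2_def b1_def b2_def
  by (simp only: vec3_expand power2_eq_square) algebra

definition mean_curv_num :: "(real^2 \<Rightarrow> real^3) \<Rightarrow> real^2 \<Rightarrow> real" where
  "mean_curv_num f y = - ((pd 2 f y \<bullet> pd 2 f y) * (pd 1 (pd 1 f) y \<bullet> nvec f y)
       - 2 * (pd 1 f y \<bullet> pd 2 f y) * (pd 1 (pd 2 f) y \<bullet> nvec f y)
       + (pd 1 f y \<bullet> pd 1 f y) * (pd 2 (pd 2 f) y \<bullet> nvec f y))"

definition mean_curv_pd_num :: "(real^2 \<Rightarrow> real^3) \<Rightarrow> 2 \<Rightarrow> real^2 \<Rightarrow> real" where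
  "mean_curv_pd_num f k y =
     - (pd k (nvec f) y $ 3) * gdet f y + nvec f y $ 3 * (nvec f y \<bullet> pd k (nvec f) y)"

context immersed_chart
begin

lemma sqrt_gdet_pos: "y \<in> U \<Longrightarrow> sqrt (gdet f y) > 0"
  using gdet_pos by simp

lemma sqrt_gdet_mult_self:
  "y \<in> U \<Longrightarrow> sqrt (gdet f y) * sqrt (gdet f y) = gdet f y"
  "y \<in> U \<Longrightarrow> sqrt (gdet f y) * (sqrt (gdet f y) * z) = gdet f y * z"
  using gdet_pos[of y] by (simp_all add: mult.assoc[symmetric])

lemma christoffel_eq:
  assumes y: "y \<in> U"
  shows "christoffel f k i j y
    = (\<Sum>l\<in>UNIV. adjugate2 (metric f y) k l / gdet f y * (pd i (pd j f) y \<bullet> pd l f y))"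
proof -
  have pd_metric: "pd a (\<lambda>z. metric f z $ b $ c) y = pd a (pd b f) y \<bullet> pd c f y + pd b f y \<bullet> pd a (pd c f) y"
    for a b c
    using pd_inner[OF differentiable_pd_f[OF y] differentiable_pd_f[OF y], of a b c] by simp
  have "pd i (\<lambda>z. metric f z $ j $ l) y + pd j (\<lambda>z. metric f z $ i $ l) y - pd l (\<lambda>z. metric f z $ i $ j) y
     = 2 * (pd i (pd j f) y \<bullet> pd l f y)" for l
    unfolding pd_metric using pd2_f_commute[OF y, of i j] pd2_f_commute[OF y, of i l] pd2_f_commute[OF y, of j l]
    by (simp add: inner_commute)
  then show ?thesis
    unfolding christoffel_def ginv_nth[OF y] by (simp add: sum_distrib_left)
qed

lemma pd_christoffel:
  assumes y: "y \<in> U"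
  shows "pd a (christoffel f k i j) y
    = pd a (\<lambda>z. \<Sum>l\<in>UNIV. adjugate2 (metric f z) k l / gdet f z * (pd i (pd j f) z \<bullet> pd l f z)) y"
proof (rule pd_cong_open[OF open_chart y, symmetric])
  show "(\<lambda>z. \<Sum>l\<in>UNIV. adjugate2 (metric f z) k l / gdet f z * (pd i (pd j f) z \<bullet> pd l f z))
      differentiable at y"
    using differentiable_adjugate2_metric[OF y] differentiable_gdet[OF y] differentiable_pd_f[OF y]
      differentiable_pd2_f[OF y] gdet_pos[OF y] by simp
qed (use christoffel_eq in simp)

text \<open>The Gauss equation \<open>K = det II / det I\<close>, written with the unnormalised normal.\<close>

lemma gauss_curv_eq_nvec:
  assumes x: "x \<in> U"
  shows "gauss_curv f x = ((pd 1 (pd 1 f) x \<bullet> nvec f x) * (pd 2 (pd 2 f) x \<bullet> nvec f x)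
    - (pd 1 (pd 2 f) x \<bullet> nvec f x)\<^sup>2) / (gdet f x)\<^sup>2"
proof -
  \<comment> \<open>Folding the inner products into atoms keeps the final \<open>algebra\<close> call tractable.\<close>
  define g11 where "g11 = pd 1 f x \<bullet> pd 1 f x"
  define g12 where "g12 = pd 1 f x \<bullet> pd 2 f x"
  define g22 where "g22 = pd 2 f x \<bullet> pd 2 f x"
  define p111 where "p111 = pd 1 f x \<bullet> pd 1 (pd 1 f) x"
  define p112 where "p112 = pd 1 (pd 1 f) x \<bullet> pd 2 f x"
  define p121 where "p121 = pd 1 f x \<bullet> pd 1 (pd 2 f) x"
  define p122 where "p122 = pd 2 f x \<bullet> pd 1 (pd 2 f) x"
  define p221 where "p221 = pd 1 f x \<bullet> pd 2 (pd 2 f) x"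
  define p222 where "p222 = pd 2 f x \<bullet> pd 2 (pd 2 f) x"
  define q1 where "q1 = pd 1 (pd 1 f) x \<bullet> pd 2 (pd 2 f) x"
  define q2 where "q2 = pd 1 (pd 2 f) x \<bullet> pd 1 (pd 2 f) x"
  define q3 where "q3 = pd 1 (pd 2 f) x \<bullet> pd 2 (pd 2 f) x"
  define q4 where "q4 = pd 1 (pd 1 f) x \<bullet> pd 1 (pd 2 f) x"
  define t1 where "t1 = pd 1 f x \<bullet> pd 1 (pd 2 (pd 2 f)) x"
  define t2 where "t2 = pd 2 f x \<bullet> pd 1 (pd 2 (pd 2 f)) x"
  define t3 where "t3 = pd 1 f x \<bullet> pd 1 (pd 1 (pd 2 f)) x"
  define t4 where "t4 = pd 2 f x \<bullet> pd 1 (pd 1 (pd 2 f)) x"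
  define Dv where "Dv = g11 * g22 - g12 * g12"
  have Dn: "Dv \<noteq> 0"
    using gdet_pos[OF x] gdet_eq[of f x] by (simp add: Dv_def g11_def g12_def g22_def power2_eq_square)
  show ?thesis
  using x apply (simp add: gauss_curv_def riem_def sum_2 pd_christoffel christoffel_eq det_metric)
  apply (simp add: adjugate2_def)
  apply (simp add: pd_rules differentiable_f differentiable_pd_f differentiable_pd2_f differentiable_pd3_f
      differentiable_gdet differentiable_nvec gdet_pos less_imp_neq[OF gdet_pos, symmetric] pd_gdet pd_nvec
      mixed_pd_f_sorted)
  apply (simp only: power2_eq_square inner_cross3_mult_inner_cross3 nvec_def inner_add_right dot_cross gdet_eq)
  apply (simp only: inner_commute)
  apply (simp only: g11_def[symmetric] g12_def[symmetric] g22_def[symmetric] p111_def[symmetric]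
      p112_def[symmetric] p121_def[symmetric] p122_def[symmetric] p221_def[symmetric] p222_def[symmetric]
      q1_def[symmetric] q2_def[symmetric] q3_def[symmetric] q4_def[symmetric]
      t1_def[symmetric] t2_def[symmetric] t3_def[symmetric] t4_def[symmetric])
  apply (simp only: Dv_def[symmetric])
  using Dn apply (simp add: field_simps)
  apply (simp only: Dv_def)
  apply algebra
  done
qed

lemma mean_curv_eq_num:
  assumes y: "y \<in> U"
  shows "mean_curv f y = mean_curv_num f y / (gdet f y * sqrt (gdet f y))"
  using y pd2_f_commute[OF y, of 2 1] gdet_pos[OF y] sqrt_gdet_pos[OF y]
  by (simp add: mean_curv_def sum_2 ginv_nth sff_def normal_eq_nvec adjugate2_def mean_curv_num_def
      field_simps inner_commute sqrt_gdet_mult_self)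

end

section \<open>The height function and the flux of \<open>W\<close>\<close>

definition nvec_horiz_sq :: "(real^2 \<Rightarrow> real^3) \<Rightarrow> real^2 \<Rightarrow> real" where
  "nvec_horiz_sq f y = (nvec f y $ 1)\<^sup>2 + (nvec f y $ 2)\<^sup>2"

text \<open>For a translating soliton \<open>flux f i\<close> is the \<open>i\<close>-th component of \<open>vol f \<cdot> W\<close>, so that
\<open>div W\<close> is \<open>(\<partial>\<^sub>1 flux\<^sub>1 + \<partial>\<^sub>2 flux\<^sub>2) / vol\<close>.\<close>

definition flux_num :: "(real^2 \<Rightarrow> real^3) \<Rightarrow> 2 \<Rightarrow> real^2 \<Rightarrow> real" where
  "flux_num f i y =
     (if i = 1 then (pd 2 (pd 2 f) y \<bullet> nvec f y) * (pd 1 f y $ 3) - (pd 1 (pd 2 f) y \<bullet> nvec f y) * (pd 2 f y $ 3)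
      else (pd 1 (pd 1 f) y \<bullet> nvec f y) * (pd 2 f y $ 3) - (pd 1 (pd 2 f) y \<bullet> nvec f y) * (pd 1 f y $ 3))"

definition flux :: "(real^2 \<Rightarrow> real^3) \<Rightarrow> 2 \<Rightarrow> real^2 \<Rightarrow> real" where
  "flux f i y = flux_num f i y / nvec_horiz_sq f y"

lemma nvec_horiz_sq_eq:
  "nvec_horiz_sq f y = (pd 1 f y $ 3)\<^sup>2 * (pd 2 f y \<bullet> pd 2 f y)
     - 2 * (pd 1 f y $ 3) * (pd 2 f y $ 3) * (pd 1 f y \<bullet> pd 2 f y) + (pd 2 f y $ 3)\<^sup>2 * (pd 1 f y \<bullet> pd 1 f y)"
  unfolding nvec_horiz_sq_def nvec_def by (rule cross3_horiz_sq)

context immersed_chart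
begin

lemma gin_grad_height:
  assumes y: "y \<in> U"
  shows "gin f y (grad f (height f) y) (grad f (height f) y) = nvec_horiz_sq f y / gdet f y"
proof -
  have "gdet f y \<noteq> 0"
    using gdet_pos[OF y] by simp
  then show ?thesis
    unfolding nvec_horiz_sq_eq
    apply (simp add: gin_eq grad_nth sum_2 ginv_nth[OF y] adjugate2_def pd_height[OF y] field_simps
        inner_commute)
    apply (simp add: gdet_eq)
    apply algebra
    done
qed

lemma nvec_horiz_sq_nonzero:
  assumes x: "x \<in> U" and grad: "grad f (height f) x \<noteq> 0"
  shows "nvec_horiz_sq f x \<noteq> 0"
proof
  assume "nvec_horiz_sq f x = 0"
  then have horiz: "nvec f x $ 1 = 0" "nvec f x $ 2 = 0"
    unfolding nvec_horiz_sq_def by (simp_all add: sum_power2_eq_zero_iff)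
  have vert: "nvec f x $ 3 \<noteq> 0"
  proof
    assume "nvec f x $ 3 = 0"
    then have "nvec f x = 0"
      using horiz by (simp add: vec_eq_iff forall_3)
    then show False
      using nvec_nonzero[OF x] by simp
  qed
  have "pd 1 f x \<bullet> nvec f x = 0" "pd 2 f x \<bullet> nvec f x = 0"
    unfolding nvec_def by (simp_all add: dot_cross_self)
  then have "pd 1 f x $ 3 * nvec f x $ 3 = 0" "pd 2 f x $ 3 * nvec f x $ 3 = 0"
    using horiz by (simp_all add: inner_vec_def sum_3)
  then have "pd 1 f x $ 3 = 0" "pd 2 f x $ 3 = 0"
    using vert by simp_all
  then have "grad f (height f) x = 0"
    by (simp add: vec_eq_iff grad_nth sum_2 pd_height[OF x])
  with grad show False
    by simp
qed

lemma differentiable_nvec_horiz_sq: "y \<in> U \<Longrightarrow> nvec_horiz_sq f differentiable at y"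
  unfolding nvec_horiz_sq_def[abs_def] power2_eq_square using differentiable_nvec by simp

lemma pd_nvec_horiz_sq: "y \<in> U \<Longrightarrow>
    pd k (nvec_horiz_sq f) y = 2 * (nvec f y $ 1 * pd k (nvec f) y $ 1 + nvec f y $ 2 * pd k (nvec f) y $ 2)"
  unfolding nvec_horiz_sq_def[abs_def] power2_eq_square using differentiable_nvec[of y]
  by (simp add: pd_rules algebra_simps)

lemma open_nvec_horiz_sq_nonzero: "open {y \<in> U. nvec_horiz_sq f y \<noteq> 0}"
proof -
  have "continuous_on U (nvec_horiz_sq f)"
    using continuous_on_eq_continuous_at[OF open_chart] differentiable_nvec_horiz_sq
      differentiable_imp_continuous_within by blast
  then have "open (nvec_horiz_sq f -` (- {0}) \<inter> U)"
    using continuous_on_open_vimage[OF open_chart] by blast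
  moreover have "{y \<in> U. nvec_horiz_sq f y \<noteq> 0} = nvec_horiz_sq f -` (- {0}) \<inter> U"
    by auto
  ultimately show ?thesis
    by simp
qed

lemma differentiable_flux_num: "y \<in> U \<Longrightarrow> flux_num f i differentiable at y"
  unfolding flux_num_def[abs_def]
  using differentiable_nvec[of y] differentiable_pd_f[of y] differentiable_pd2_f[of y]
  by (cases "i = 1") simp_all

lemma differentiable_flux: "y \<in> U \<Longrightarrow> nvec_horiz_sq f y \<noteq> 0 \<Longrightarrow> flux f i differentiable at y"
  unfolding flux_def[abs_def] using differentiable_flux_num differentiable_nvec_horiz_sq by simp

lemma flux_divergence_free:
  assumes x: "x \<in> U" and nz: "nvec_horiz_sq f x \<noteq> 0"
  shows "pd 1 (flux f 1) x + pd 2 (flux f 2) x = 0"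
proof -
  have "pd 1 (flux_num f 1) x * nvec_horiz_sq f x - flux_num f 1 x * pd 1 (nvec_horiz_sq f) x
      + (pd 2 (flux_num f 2) x * nvec_horiz_sq f x - flux_num f 2 x * pd 2 (nvec_horiz_sq f) x) = 0"
    unfolding pd_nvec_horiz_sq[OF x] flux_num_def[abs_def]
    apply (simp add: pd_rules differentiable_nvec differentiable_pd_f differentiable_pd2_f x pd_nvec)
    apply (simp add: mixed_pd_f_sorted[OF x] nvec_horiz_sq_def)
    apply (simp only: nvec_def power2_eq_square vec3_expand)
    apply algebra
    done
  then show ?thesis
    unfolding flux_def[abs_def]
    using differentiable_flux_num[OF x] differentiable_nvec_horiz_sq[OF x] nz
    by (simp add: pd_divide add_divide_distrib[symmetric])
qed

lemma flux_num_identity: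
  assumes y: "y \<in> U"
  shows "- ((pd 2 f y \<bullet> pd 2 f y) * mean_curv_pd_num f 1 y - (pd 1 f y \<bullet> pd 2 f y) * mean_curv_pd_num f 2 y
      + mean_curv_num f y * ((pd 2 f y \<bullet> pd 2 f y) * (pd 1 f y $ 3) - (pd 1 f y \<bullet> pd 2 f y) * (pd 2 f y $ 3)))
      = flux_num f 1 y * gdet f y"
    and "- (- (pd 1 f y \<bullet> pd 2 f y) * mean_curv_pd_num f 1 y + (pd 1 f y \<bullet> pd 1 f y) * mean_curv_pd_num f 2 y
      + mean_curv_num f y * (- (pd 1 f y \<bullet> pd 2 f y) * (pd 1 f y $ 3) + (pd 1 f y \<bullet> pd 1 f y) * (pd 2 f y $ 3)))
      = flux_num f 2 y * gdet f y"
  unfolding mean_curv_pd_num_def mean_curv_num_def flux_num_def gdet_def nvec_def pd_nvec[OF y]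
    mixed_pd_f_sorted(1)[OF y]
  by (simp_all only: if_P[OF refl] if_not_P[OF two_neq(2)]) (rule flux_polynomial_identity)+

lemma mean_curv_pd_num_flux_num:
  assumes y: "y \<in> U"
  shows "mean_curv_pd_num f 1 y * flux_num f 1 y + mean_curv_pd_num f 2 y * flux_num f 2 y
    = ((pd 1 (pd 1 f) y \<bullet> nvec f y) * (pd 2 (pd 2 f) y \<bullet> nvec f y) - (pd 1 (pd 2 f) y \<bullet> nvec f y)\<^sup>2)
      * nvec_horiz_sq f y"
  unfolding mean_curv_pd_num_def flux_num_def gdet_def nvec_horiz_sq_def nvec_def pd_nvec[OF y]
    mixed_pd_f_sorted(1)[OF y]
  by (simp only: if_P[OF refl] if_not_P[OF two_neq(2)]) (rule gauss_flux_polynomial_identity)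

end

section \<open>Translating solitons\<close>

locale translating_soliton_chart =
  fixes U :: "(real^2) set" and f :: "real^2 \<Rightarrow> real^3"
  assumes soliton: "translating_soliton U f"

sublocale translating_soliton_chart \<subseteq> immersed_chart
  by unfold_locales (use soliton in \<open>simp add: translating_soliton_def\<close>)

context translating_soliton_chart
begin

lemma mean_curv_soliton: "y \<in> U \<Longrightarrow> mean_curv f y = - (nvec f y $ 3) / sqrt (gdet f y)"
  using soliton by (simp add: translating_soliton_def normal_eq_nvec inner_axis')

lemma differentiable_mean_curv_soliton:
  "y \<in> U \<Longrightarrow> (\<lambda>z. - (nvec f z $ 3) / sqrt (gdet f z)) differentiable at y"
  using differentiable_nvec[of y] differentiable_gdet[of y] gdet_pos[of y] by simp

lemma differentiable_mean_curv: "y \<in> U \<Longrightarrow> mean_curv f differentiable at y"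
  by (rule differentiable_cong_open[OF open_chart _ _ differentiable_mean_curv_soliton])
    (auto simp: mean_curv_soliton)

lemma pd_mean_curv:
  assumes y: "y \<in> U"
  shows "pd k (mean_curv f) y = mean_curv_pd_num f k y / (gdet f y * sqrt (gdet f y))"
proof -
  have "pd k (mean_curv f) y = pd k (\<lambda>z. - (nvec f z $ 3) / sqrt (gdet f z)) y"
    by (rule pd_cong_open[OF open_chart y _ differentiable_mean_curv[OF y]]) (simp add: mean_curv_soliton)
  also have "\<dots> = mean_curv_pd_num f k y / (gdet f y * sqrt (gdet f y))"
    using y gdet_pos[OF y] sqrt_gdet_pos[OF y]
    by (simp add: pd_rules differentiable_nvec differentiable_gdet pd_gdet mean_curv_pd_num_def
        field_simps sqrt_gdet_mult_self)
  finally show ?thesis .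
qed

lemma vol_mult_Wfield:
  assumes y: "y \<in> U" and nz: "nvec_horiz_sq f y \<noteq> 0"
  shows "vol f y * Wfield f y $ i = flux f i y"
proof -
  have gdet: "gdet f y \<noteq> 0" "sqrt (gdet f y) \<noteq> 0"
    using gdet_pos[OF y] by simp_all
  have W: "vol f y * Wfield f y $ i = - (sqrt (gdet f y) * gdet f y / nvec_horiz_sq f y) *
     ((\<Sum>j\<in>UNIV. adjugate2 (metric f y) i j / gdet f y * (mean_curv_pd_num f j y / (gdet f y * sqrt (gdet f y))))
      + mean_curv_num f y / (gdet f y * sqrt (gdet f y))
        * (\<Sum>j\<in>UNIV. adjugate2 (metric f y) i j / gdet f y * (pd j f y $ 3)))"
    unfolding Wfield_def vol_eq_sqrt_gdet gin_grad_height[OF y]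
    by (simp add: grad_nth ginv_nth[OF y] pd_mean_curv[OF y] pd_height[OF y] mean_curv_eq_num[OF y])
  consider "i = 1" | "i = 2"
    using exhaust_2 by blast
  then show ?thesis
  proof cases
    case 1
    show ?thesis
      unfolding W flux_def unfolding 1 using gdet nz
      apply (simp add: sum_2 adjugate2_def field_simps sqrt_gdet_mult_self[OF y] abs_of_pos[OF gdet_pos[OF y]])
      using flux_num_identity(1)[OF y] by (simp add: inner_commute; algebra)
  next
    case 2
    show ?thesis
      unfolding W flux_def unfolding 2 using gdet nz
      apply (simp add: sum_2 adjugate2_def field_simps sqrt_gdet_mult_self[OF y] abs_of_pos[OF gdet_pos[OF y]])
      using flux_num_identity(2)[OF y] by (simp add: inner_commute; algebra)
  qed
qed

lemma Wfield_nth: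
  assumes y: "y \<in> U" and nz: "nvec_horiz_sq f y \<noteq> 0"
  shows "Wfield f y $ i = flux f i y / vol f y"
  using vol_mult_Wfield[OF y nz, of i] sqrt_gdet_pos[OF y] by (simp add: vol_eq_sqrt_gdet field_simps)

lemma gin_grad_Wfield:
  assumes x: "x \<in> U" and nz: "nvec_horiz_sq f x \<noteq> 0"
  shows "gin f x (grad f h x) (Wfield f x) = (pd 1 h x * flux f 1 x + pd 2 h x * flux f 2 x) / vol f x"
proof -
  have "gdet f x \<noteq> 0" "vol f x \<noteq> 0"
    using gdet_pos[OF x] sqrt_gdet_pos[OF x] by (simp_all add: vol_eq_sqrt_gdet)
  then show ?thesis
    apply (simp add: gin_eq grad_nth sum_2 Wfield_nth[OF x nz] ginv_nth[OF x] adjugate2_def field_simps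
        inner_commute)
    apply (simp add: gdet_eq)
    apply algebra
    done
qed

lemma divg_scaleR_Wfield:
  assumes x: "x \<in> U" and nz: "nvec_horiz_sq f x \<noteq> 0" and h: "h differentiable at x"
  shows "divg f (\<lambda>y. h y *\<^sub>R Wfield f y) x = (pd 1 h x * flux f 1 x + pd 2 h x * flux f 2 x) / vol f x"
proof -
  define V where "V = {y \<in> U. nvec_horiz_sq f y \<noteq> 0}"
  have V: "open V" "x \<in> V"
    using open_nvec_horiz_sq_nonzero x nz by (auto simp: V_def)
  have "pd i (\<lambda>y. vol f y * (h y *\<^sub>R Wfield f y) $ i) x = pd i (\<lambda>y. h y * flux f i y) x" for i
    by (rule pd_cong_open[OF V, symmetric])
      (use vol_mult_Wfield differentiable_flux[OF x nz] h in \<open>auto simp: V_def\<close>)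
  also have "\<dots> i = pd i h x * flux f i x + h x * pd i (flux f i) x" for i
    by (rule pd_mult[OF h differentiable_flux[OF x nz]])
  finally have pd_eq: "pd i (\<lambda>y. vol f y * (h y *\<^sub>R Wfield f y) $ i) x
      = pd i h x * flux f i x + h x * pd i (flux f i) x" for i .
  have "h x * pd 1 (flux f 1) x + h x * pd 2 (flux f 2) x = 0"
    using flux_divergence_free[OF x nz] by (metis distrib_left mult_zero_right)
  then have "(\<Sum>i\<in>UNIV. pd i h x * flux f i x + h x * pd i (flux f i) x)
      = pd 1 h x * flux f 1 x + pd 2 h x * flux f 2 x"
    by (simp add: sum_2)
  then show ?thesis
    unfolding divg_def pd_eq by simp
qed

lemma gauss_curv_eq_flux:
  assumes x: "x \<in> U" and nz: "nvec_horiz_sq f x \<noteq> 0"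
  shows "gauss_curv f x
    = (pd 1 (mean_curv f) x * flux f 1 x + pd 2 (mean_curv f) x * flux f 2 x) / vol f x"
proof -
  have "gdet f x \<noteq> 0" "sqrt (gdet f x) \<noteq> 0"
    using gdet_pos[OF x] by simp_all
  then show ?thesis
    unfolding gauss_curv_eq_nvec[OF x] pd_mean_curv[OF x] vol_eq_sqrt_gdet flux_def using nz
    apply (simp add: field_simps sqrt_gdet_mult_self[OF x] abs_of_pos[OF gdet_pos[OF x]])
    using mean_curv_pd_num_flux_num[OF x] by algebra
qed

lemma Wfield_eq_grad_exp_mean_curv:
  assumes x: "x \<in> U"
  shows "Wfield f x = - (1 / (exp (height f x) *
      gin f x (grad f (height f) x) (grad f (height f) x))) *\<^sub>R
      grad f (\<lambda>y. exp (height f y) * mean_curv f y) x"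
proof -
  have "grad f (\<lambda>y. exp (height f y) * mean_curv f y) x =
     exp (height f x) *\<^sub>R (grad f (mean_curv f) x + mean_curv f x *\<^sub>R grad f (height f) x)"
    using differentiable_height[OF x] differentiable_mean_curv[OF x]
    by (simp add: vec_eq_iff grad_nth pd_mult pd_exp sum_2 algebra_simps)
  then show ?thesis
    by (simp add: Wfield_def)
qed

lemma divg_Wfield:
  assumes x: "x \<in> U" and nz: "nvec_horiz_sq f x \<noteq> 0"
  shows "divg f (Wfield f) x = 0"
  using divg_scaleR_Wfield[OF x nz, of "\<lambda>y. 1"] by (simp add: pd_const)

lemma gauss_curv_eq_gin_grad_mean_curv_Wfield:
  assumes x: "x \<in> U" and nz: "nvec_horiz_sq f x \<noteq> 0"
  shows "gauss_curv f x = gin f x (grad f (mean_curv f) x) (Wfield f x)"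
  using gauss_curv_eq_flux[OF x nz] gin_grad_Wfield[OF x nz] by simp

lemma gauss_curv_eq_divg_mean_curv_Wfield:
  assumes x: "x \<in> U" and nz: "nvec_horiz_sq f x \<noteq> 0"
  shows "gauss_curv f x = divg f (\<lambda>y. mean_curv f y *\<^sub>R Wfield f y) x"
  using gauss_curv_eq_flux[OF x nz] divg_scaleR_Wfield[OF x nz differentiable_mean_curv[OF x]] by simp

end

theorem corollary4p6:
  fixes U :: "(real^2) set" and f :: "real^2 \<Rightarrow> real^3"
  assumes "translating_soliton U f"
  shows "\<forall>x\<in>U. grad f (height f) x \<noteq> 0 \<longrightarrow>
      Wfield f x = - (1 / (exp (height f x) *
                       gin f x (grad f (height f) x) (grad f (height f) x))) *\<^sub>R
                   grad f (\<lambda>y. exp (height f y) * mean_curv f y) x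
    \<and> divg f (Wfield f) x = 0
    \<and> gauss_curv f x = gin f x (grad f (mean_curv f) x) (Wfield f x)
    \<and> gauss_curv f x = divg f (\<lambda>y. mean_curv f y *\<^sub>R Wfield f y) x"
proof -
  interpret translating_soliton_chart U f
    by unfold_locales (fact assms)
  show ?thesis
    using nvec_horiz_sq_nonzero Wfield_eq_grad_exp_mean_curv divg_Wfield
      gauss_curv_eq_gin_grad_mean_curv_Wfield gauss_curv_eq_divg_mean_curv_Wfield
    by blast
qed

end
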